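(* Consider the saddle-point problem $\min_{x_1\in\mathcal{X}_1}\max_{x_2\in\mathcal{X}_2} f(x_1,x_2)$ described in the context, and assume it is coherent. Assume $g$ is $L_g$-Lipschitz, i.e. $\|g(x)-g(x')\|_*\le L_g\|x-x'\|$ for all $x,x'\in\mathcal{X}$. Run the optimistic mirror descent algorithm with exact gradients, $$Y_n = P_{X_n}(-\gamma_n g(X_n)),\qquad X_{n+1} = P_{X_n}(-\gamma_n g(Y_n)),$$ with a step-size sequence $\{\gamma_n\}_n$ satisfying $$0<\lim_{n\to\infty}\gamma_n\le \sup_n \gamma_n < K/L_g.$$ Then $\lim_{n\to\infty} X_n = x^*$ for some $x^*\in\mathcal{X}^*$. Moreover, there exists a sufficiently large $n_0$ such that $D(x^*,X_n)$ decreases monotonically in $n$ for all $n\ge n_0$.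
   Context: Let $\mathcal{V}_i=\mathbb{R}^{d_i}$ ($i=1,2$) be finite-dimensional normed spaces, $\mathcal{X}_i\subset\mathcal{V}_i$ compact convex sets, $\mathcal{X}=\mathcal{X}_1\times\mathcal{X}_2\subset\mathcal{V}=\mathcal{V}_1\times\mathcal{V}_2$ with norm $\|\cdot\|$ and dual norm $\|\cdot\|_*$ on $\mathcal{V}^*$. Let $f:\mathcal{X}\to\mathbb{R}$ be continuously differentiable and $g(x)=(\nabla_{x_1}f(x_1,x_2),-\nabla_{x_2}f(x_1,x_2))\in\mathcal{V}^*$. Let $\mathcal{X}^*$ be the set of solutions (saddle points) of the problem (SP) $\min_{x_1}\max_{x_2} f$. A point $x^*$ solves (SVI) if $\langle g(x^* ),x-x^*\rangle\ge0$ for all $x\in\mathcal{X}$, and satisfies (MVI) if $\langle g(x),x-x^*\rangle\ge 0$ for all $x\in\mathcal{X}$. (SP) is coherent if: (1) every solution of (SVI) solves (SP); (2) there is a solution $p$ of (SP) satisfying (MVI); (3) for some fixed $\epsilon_0>0$, every solution $x^*$ of (SP) satisfies $\langle g(x),x-x^*\rangle\ge0$ for all $x\in\mathcal{X}$ with $D(x^*,x)\le\epsilon_0$. Fix a differentiable function $h$ whose domain contains $\mathcal{X}$, which is $K$-strongly convex in the sense $\langle\nabla h(x)-\nabla h(x'),x-x'\rangle\ge K\|x-x'\|^2$ for all $x,x'\in\mathcal{X}$, and whose gradient is $L_h$-Lipschitz ($\|\nabla h(x)-\nabla h(x')\|_*\le L_h\|x-x'\|$). The Bregman divergence is $D(p,x)=h(p)-h(x)-\langle\nabla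 h(x),p-x\rangle$, and it is assumed to satisfy the Bregman reciprocity condition: $D(p,x_n)\to0$ whenever $x_n\to p$. The prox-mapping is $P_x(y)=\arg\min_{x'\in\mathcal{X}}\{\langle y,x-x'\rangle+D(x',x)\}$ for $y\in\mathcal{V}^*$. *)

theory Defs
  imports "HOL-Analysis.Analysis"
begin

text \<open>V = V1 x V2 with V_i a Euclidean space; the dual space V* is identified with V
  through the inner product, so the pairing <y,x> is y \<bullet> x.\<close>

definition is_norm :: "('v::real_vector \<Rightarrow> real) \<Rightarrow> bool" where
  "is_norm N \<longleftrightarrow> (\<forall>x. 0 \<le> N x) \<and> (\<forall>x. N x = 0 \<longleftrightarrow> x = 0)
     \<and> (\<forall>c x. N (c *\<^sub>R x) = \<bar>c\<bar> * N x) \<and> (\<forall>x y. N (x + y) \<le> N x + N y)"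

definition dual_norm :: "('v::real_inner \<Rightarrow> real) \<Rightarrow> 'v \<Rightarrow> real" where
  "dual_norm N y = (SUP x\<in>{x. N x \<le> 1}. y \<bullet> x)"

definition bregman :: "('v::real_inner \<Rightarrow> real) \<Rightarrow> ('v \<Rightarrow> 'v) \<Rightarrow> 'v \<Rightarrow> 'v \<Rightarrow> real" where
  "bregman h dh p x = h p - h x - dh x \<bullet> (p - x)"

definition prox :: "'v::real_inner set \<Rightarrow> ('v \<Rightarrow> real) \<Rightarrow> ('v \<Rightarrow> 'v) \<Rightarrow> 'v \<Rightarrow> 'v \<Rightarrow> 'v" where
  "prox X h dh x y = (THE x'. is_arg_min (\<lambda>x'. y \<bullet> (x - x') + bregman h dh x' x) (\<lambda>x'. x' \<in> X) x')"

definition saddle_points :: "'a set \<Rightarrow> 'b set \<Rightarrow> ('a \<times> 'b \<Rightarrow> real) \<Rightarrow> ('a \<times> 'b) set" where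
  "saddle_points X1 X2 f = {(x1, x2). x1 \<in> X1 \<and> x2 \<in> X2 \<and>
      (\<forall>y1\<in>X1. \<forall>y2\<in>X2. f (x1, y2) \<le> f (x1, x2) \<and> f (x1, x2) \<le> f (y1, x2))}"

definition is_SVI :: "'v::real_inner set \<Rightarrow> ('v \<Rightarrow> 'v) \<Rightarrow> 'v \<Rightarrow> bool" where
  "is_SVI X g xs \<longleftrightarrow> xs \<in> X \<and> (\<forall>x\<in>X. g xs \<bullet> (x - xs) \<ge> 0)"

definition is_MVI :: "'v::real_inner set \<Rightarrow> ('v \<Rightarrow> 'v) \<Rightarrow> 'v \<Rightarrow> bool" where
  "is_MVI X g xs \<longleftrightarrow> (\<forall>x\<in>X. g x \<bullet> (x - xs) \<ge> 0)"

definition coherent :: "'a::euclidean_space set \<Rightarrow> 'b::euclidean_space set \<Rightarrow> ('a \<times> 'b \<Rightarrow> real)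
    \<Rightarrow> ('a \<times> 'b \<Rightarrow> 'a \<times> 'b) \<Rightarrow> ('a \<times> 'b \<Rightarrow> 'a \<times> 'b \<Rightarrow> real) \<Rightarrow> bool" where
  "coherent X1 X2 f g D \<longleftrightarrow>
     (\<forall>xs. is_SVI (X1 \<times> X2) g xs \<longrightarrow> xs \<in> saddle_points X1 X2 f)
   \<and> (\<exists>p\<in>saddle_points X1 X2 f. is_MVI (X1 \<times> X2) g p)
   \<and> (\<exists>\<epsilon>0>0. \<forall>xs\<in>saddle_points X1 X2 f. \<forall>x\<in>X1 \<times> X2.
          D xs x \<le> \<epsilon>0 \<longrightarrow> g x \<bullet> (x - xs) \<ge> 0)"

end

theory Submission
  imports Defs
begin

text \<open>
  The three-point identity of the Bregman divergence, combined with the variational inequalities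
  characterising the two prox steps and the Lipschitz bound on \<open>g\<close>, gives for every \<open>p\<close>
  the energy inequality
    \<open>D(p, X (n+1)) \<le> D(p, X n) - \<gamma> n \<langle>g (Y n), Y n - p\<rangle> - \<delta> (N(X (n+1) - Y n)\<^sup>2 + N(Y n - X n)\<^sup>2)\<close>
  with \<open>\<delta> = (K - sup \<gamma> \<cdot> Lg) / 2 > 0\<close>.
  For a solution \<open>p\<close> of the MVI the gradient term is nonnegative, so \<open>D(p, X n)\<close> decreases and
  \<open>Y n - X n \<longlonglongrightarrow> 0\<close>; passing to the limit in the first prox inequality along a convergent
  subsequence shows that every cluster point \<open>l\<close> solves the SVI, hence is a saddle point.
  By coherence \<open>\<langle>g x, x - l\<rangle> \<ge> 0\<close> on a Bregman neighbourhood of \<open>l\<close>, so once the iterates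
  are close enough to \<open>l\<close> (which happens along the subsequence, by Bregman reciprocity) the energy
  inequality with \<open>p = l\<close> traps them there with \<open>D(l, X n)\<close> nonincreasing. A nonincreasing
  sequence with a subsequence tending to 0 tends to 0, and strong convexity turns
  \<open>D(l, X n) \<longlonglongrightarrow> 0\<close> into \<open>X n \<longlonglongrightarrow> l\<close>.
\<close>

section \<open>Norms on Euclidean spaces\<close>

lemma is_norm_nonneg: "is_norm N \<Longrightarrow> 0 \<le> N x"
  unfolding is_norm_def by blast

lemma is_norm_eq_zero_iff: "is_norm N \<Longrightarrow> N x = 0 \<longleftrightarrow> x = 0"
  unfolding is_norm_def by blast

lemma is_norm_zero: "is_norm N \<Longrightarrow> N 0 = 0"
  unfolding is_norm_def by blast

lemma is_norm_scaleR: "is_norm N \<Longrightarrow> N (c *\<^sub>R x) = \<bar>c\<bar> * N x"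
  unfolding is_norm_def by blast

lemma is_norm_triangle: "is_norm N \<Longrightarrow> N (x + y) \<le> N x + N y"
  unfolding is_norm_def by blast

lemma is_norm_minus_commute: "is_norm N \<Longrightarrow> N (x - y) = N (y - x)"
  using is_norm_scaleR[of N "-1" "x - y"] by simp

lemma is_norm_sum: "is_norm N \<Longrightarrow> N (sum f A) \<le> (\<Sum>i\<in>A. N (f i))"
proof (induction A rule: infinite_finite_induct)
  case (insert a A)
  then show ?case using is_norm_triangle[of N "f a" "sum f A"] by simp
qed (auto simp: is_norm_zero)

lemma is_norm_le_norm:
  fixes N :: "'v::euclidean_space \<Rightarrow> real"
  assumes N: "is_norm N"
  shows "\<exists>C\<ge>0. \<forall>x. N x \<le> C * norm x"
proof (intro exI conjI allI)
  show "0 \<le> (\<Sum>b\<in>Basis. N b)" using is_norm_nonneg[OF N] by (simp add: sum_nonneg)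
  fix x :: 'v
  have "N x = N (\<Sum>b\<in>Basis. (x \<bullet> b) *\<^sub>R b)" by (simp add: euclidean_representation)
  also have "\<dots> \<le> (\<Sum>b\<in>Basis. \<bar>x \<bullet> b\<bar> * N b)"
    using is_norm_sum[OF N, of "\<lambda>b. (x \<bullet> b) *\<^sub>R b" Basis] by (simp add: is_norm_scaleR[OF N])
  also have "\<dots> \<le> (\<Sum>b\<in>Basis. norm x * N b)"
    by (intro sum_mono mult_right_mono Basis_le_norm is_norm_nonneg[OF N])
  finally show "N x \<le> (\<Sum>b\<in>Basis. N b) * norm x" by (simp add: sum_distrib_left mult.commute)
qed

text \<open>The minimum of \<open>N\<close> on the compact Euclidean unit sphere is positive.\<close>
lemma is_norm_ge_norm:
  fixes N :: "'v::euclidean_space \<Rightarrow> real"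
  assumes N: "is_norm N"
  shows "\<exists>c>0. \<forall>x. c * norm x \<le> N x"
proof -
  obtain C where C: "C \<ge> 0" "\<And>x. N x \<le> C * norm x" using is_norm_le_norm[OF N] by blast
  have "C-lipschitz_on UNIV N"
  proof (rule lipschitz_onI)
    fix x y :: 'v
    have "\<bar>N x - N y\<bar> \<le> N (x - y)"
      using is_norm_triangle[OF N, of "x - y" y] is_norm_triangle[OF N, of "y - x" x]
        is_norm_minus_commute[OF N, of x y] by simp
    then show "dist (N x) (N y) \<le> C * dist x y" using C(2)[of "x - y"] by (simp add: dist_norm)
  qed (rule C(1))
  then have cont: "continuous_on (sphere 0 1) N"
    using lipschitz_on_continuous_on continuous_on_subset by blast
  obtain b :: 'v where "b \<in> Basis" using nonempty_Basis by blast
  then have "sphere (0::'v) 1 \<noteq> {}" by (metis empty_iff mem_sphere_0 norm_Basis)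
  then obtain m where m: "m \<in> sphere 0 1" "\<And>y. y \<in> sphere 0 1 \<Longrightarrow> N m \<le> N y"
    using continuous_attains_inf[OF compact_sphere _ cont] by blast
  have "N m > 0" using m(1) is_norm_nonneg[OF N] is_norm_eq_zero_iff[OF N] by (force simp: order_le_less)
  moreover have "N m * norm x \<le> N x" for x
  proof (cases "x = 0")
    case False
    then have "N m \<le> N (x /\<^sub>R norm x)" using m(2) by simp
    also have "\<dots> = N x / norm x" using is_norm_scaleR[OF N] by (simp add: divide_inverse_commute)
    finally show ?thesis using False by (simp add: field_simps)
  qed (simp add: is_norm_zero[OF N])
  ultimately show ?thesis by blast
qed

lemma inner_le_dual_norm:
  fixes N :: "'v::euclidean_space \<Rightarrow> real"
  assumes N: "is_norm N"
  shows "y \<bullet> v \<le> dual_norm N y * N v"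
proof (cases "v = 0")
  case False
  obtain c where c: "c > 0" "\<And>x. c * norm x \<le> N x" using is_norm_ge_norm[OF N] by blast
  have bdd: "bdd_above ((\<lambda>x. y \<bullet> x) ` {x. N x \<le> 1})"
  proof (rule bdd_aboveI2)
    fix x assume "x \<in> {x. N x \<le> 1}"
    then have "norm x \<le> 1 / c" using c order_trans[OF c(2)] by (simp add: field_simps mult.commute)
    then show "y \<bullet> x \<le> norm y / c"
      using norm_cauchy_schwarz[of y x] mult_left_mono[of "norm x" "1 / c" "norm y"] by simp
  qed
  have Nv: "N v > 0" using False is_norm_nonneg[OF N] is_norm_eq_zero_iff[OF N] by (force simp: order_le_less)
  then have "N (v /\<^sub>R N v) = 1" using is_norm_scaleR[OF N] by simp
  then have "y \<bullet> (v /\<^sub>R N v) \<le> dual_norm N y" unfolding dual_norm_def by (intro cSUP_upper[OF _ bdd]) simp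
  then show ?thesis using Nv by (simp add: field_simps mult.commute)
qed (simp add: is_norm_zero[OF N])

lemma dual_norm_lipschitz_imp_lipschitz_on:
  fixes N :: "'v::euclidean_space \<Rightarrow> real" and F :: "'v \<Rightarrow> 'v"
  assumes N: "is_norm N"
    and lip: "\<And>x x'. x \<in> S \<Longrightarrow> x' \<in> S \<Longrightarrow> dual_norm N (F x - F x') \<le> L * N (x - x')"
  shows "\<exists>M. M-lipschitz_on S F"
proof -
  obtain C where C: "C \<ge> 0" "\<And>x. N x \<le> C * norm x" using is_norm_le_norm[OF N] by blast
  have "norm (F x - F x') \<le> (\<bar>L\<bar> * C * C) * norm (x - x')" if "x \<in> S" "x' \<in> S" for x x'
  proof -
    define w where "w = F x - F x'"
    have "(norm w)\<^sup>2 \<le> dual_norm N w * N w"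
      using inner_le_dual_norm[OF N, of w w] by (simp add: power2_norm_eq_inner)
    also have "\<dots> \<le> \<bar>L\<bar> * N (x - x') * N w"
      using lip[OF that] is_norm_nonneg[OF N, of "x - x'"] is_norm_nonneg[OF N, of w] unfolding w_def
      by (intro mult_right_mono) (auto intro: order_trans abs_ge_self mult_right_mono)
    also have "\<dots> \<le> \<bar>L\<bar> * (C * norm (x - x')) * (C * norm w)"
      using C is_norm_nonneg[OF N] by (intro mult_mono mult_left_mono) auto
    finally have "norm w * norm w \<le> (\<bar>L\<bar> * C * C * norm (x - x')) * norm w"
      by (simp add: power2_eq_square algebra_simps)
    then show ?thesis unfolding w_def[symmetric]
      using C(1) by (cases "norm w = 0") (auto simp: mult_le_cancel_right)
  qed
  then have "(\<bar>L\<bar> * C * C)-lipschitz_on S F" using C(1) by (intro lipschitz_onI) (auto simp: dist_norm)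
  then show ?thesis by blast
qed

section \<open>Bregman divergence and prox-mapping\<close>

lemma convex_segment_mem:
  assumes "convex S" "a \<in> S" "b \<in> S" "0 \<le> t" "t \<le> 1"
  shows "b + t *\<^sub>R (a - b) \<in> S"
proof -
  have "b + t *\<^sub>R (a - b) = (1 - t) *\<^sub>R b + t *\<^sub>R a" by (simp add: algebra_simps)
  then show ?thesis using convexD_alt[OF assms(1,3,2,4,5)] by simp
qed

lemma min_on_convex_imp_derivative_nonneg:
  fixes \<phi> :: "'v::real_normed_vector \<Rightarrow> real"
  assumes S: "convex S" and m: "m \<in> S" and p: "p \<in> S"
    and deriv: "(\<phi> has_derivative \<phi>') (at m within S)"
    and min: "\<And>z. z \<in> S \<Longrightarrow> \<phi> m \<le> \<phi> z"
  shows "0 \<le> \<phi>' (p - m)"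
proof -
  define seg where "seg t = m + t *\<^sub>R (p - m)" for t :: real
  have seg_mem: "seg ` {0..1} \<subseteq> S" unfolding seg_def using convex_segment_mem[OF S p m] by auto
  have "(seg has_derivative (\<lambda>t. t *\<^sub>R (p - m))) (at 0 within {0..1})"
    unfolding seg_def by (auto intro!: derivative_eq_intros)
  moreover have "(\<phi> has_derivative \<phi>') (at (seg 0) within seg ` {0..1})"
    using has_derivative_subset[OF deriv seg_mem] by (simp add: seg_def)
  ultimately have "((\<phi> \<circ> seg) has_derivative (\<phi>' \<circ> (\<lambda>t. t *\<^sub>R (p - m)))) (at 0 within {0..1})"
    by (rule diff_chain_within)
  moreover have "\<phi>' \<circ> (\<lambda>t. t *\<^sub>R (p - m)) = (*) (\<phi>' (p - m))"
    using linear_scale[OF has_derivative_linear[OF deriv]] by (auto simp: fun_eq_iff mult.commute)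
  ultimately have "((\<phi> \<circ> seg) has_field_derivative \<phi>' (p - m)) (at 0 within {0..1})"
    by (simp add: has_field_derivative_def)
  then have "((\<lambda>t. ((\<phi> \<circ> seg) t - (\<phi> \<circ> seg) 0) / (t - 0)) \<longlongrightarrow> \<phi>' (p - m)) (at_right 0)"
    using has_field_derivative_iff[THEN iffD1] at_within_Icc_at_right[of "0::real" 1] by fastforce
  moreover have "\<forall>\<^sub>F t in at_right 0. 0 \<le> ((\<phi> \<circ> seg) t - (\<phi> \<circ> seg) 0) / (t - 0)"
  proof (rule eventually_mono[OF eventually_at_right_real[of 0 1]])
    fix t :: real assume t: "t \<in> {0<..<1}"
    then have "seg t \<in> S" using seg_mem by auto
    then have "\<phi> (seg 0) \<le> \<phi> (seg t)" using min by (simp add: seg_def)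
    then show "0 \<le> ((\<phi> \<circ> seg) t - (\<phi> \<circ> seg) 0) / (t - 0)" using t by simp
  qed simp
  ultimately show ?thesis by (rule tendsto_lowerbound) simp
qed

lemma bregman_three_point:
  "bregman h dh p x = bregman h dh p x' + bregman h dh x' x + (dh x' - dh x) \<bullet> (p - x')"
  unfolding bregman_def by (simp add: inner_diff_left inner_diff_right algebra_simps)

lemma bregman_ge_strongly_convex:
  fixes h :: "'v::real_inner \<Rightarrow> real"
  assumes S: "convex S" and a: "a \<in> S" and b: "b \<in> S" and N: "is_norm N"
    and h_deriv: "\<And>x. x \<in> S \<Longrightarrow> (h has_derivative (\<lambda>v. dh x \<bullet> v)) (at x within S)"
    and strong: "\<And>x x'. x \<in> S \<Longrightarrow> x' \<in> S \<Longrightarrow> (dh x - dh x') \<bullet> (x - x') \<ge> K * (N (x - x'))\<^sup>2"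
  shows "K / 2 * (N (a - b))\<^sup>2 \<le> bregman h dh a b"
proof -
  define seg where "seg t = b + t *\<^sub>R (a - b)" for t :: real
  define c where "c = (N (a - b))\<^sup>2"
  define \<psi> where "\<psi> t = h (seg t) - t * (dh b \<bullet> (a - b)) - K / 2 * t\<^sup>2 * c" for t
  have seg_mem: "seg ` {0..1} \<subseteq> S" unfolding seg_def using convex_segment_mem[OF S a b] by auto
  have \<psi>_deriv: "(\<psi> has_derivative (\<lambda>s. s * ((dh (seg t) - dh b) \<bullet> (a - b) - K * t * c))) (at t within {0..1})"
    if "0 \<le> t" "t \<le> 1" for t
  proof -
    have seg_deriv: "(seg has_derivative (\<lambda>s. s *\<^sub>R (a - b))) (at t within {0..1})"
      unfolding seg_def by (auto intro!: derivative_eq_intros)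
    have "((\<lambda>t. h (seg t)) has_derivative (\<lambda>s. dh (seg t) \<bullet> (s *\<^sub>R (a - b)))) (at t within {0..1})"
      by (rule has_derivative_in_compose2[OF h_deriv seg_mem _ seg_deriv]) (use that in auto)
    moreover have "((\<lambda>t. t * (dh b \<bullet> (a - b))) has_derivative (\<lambda>s. s * (dh b \<bullet> (a - b)))) (at t within {0..1})"
      by (auto intro!: derivative_eq_intros)
    moreover have "((\<lambda>t. K / 2 * t\<^sup>2 * c) has_derivative (\<lambda>s. s * (K * t * c))) (at t within {0..1})"
      by (auto intro!: derivative_eq_intros simp: algebra_simps)
    ultimately show ?thesis unfolding \<psi>_def
      by (rule has_derivative_eq_rhs[OF has_derivative_diff[OF has_derivative_diff]])
        (auto simp: fun_eq_iff algebra_simps inner_diff_left)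
  qed
  obtain \<xi> where \<xi>: "\<xi> \<in> {0<..<1}"
    and mvt: "\<psi> 1 - \<psi> 0 = (1 - 0) * ((dh (seg \<xi>) - dh b) \<bullet> (a - b) - K * \<xi> * c)"
    using mvt_simple[of 0 1 \<psi>, OF _ \<psi>_deriv] by auto
  have "seg \<xi> \<in> S" using \<xi> seg_mem by auto
  moreover have "seg \<xi> - b = \<xi> *\<^sub>R (a - b)" by (simp add: seg_def)
  moreover have "N (\<xi> *\<^sub>R (a - b)) = \<xi> * N (a - b)" using \<xi> is_norm_scaleR[OF N] by simp
  ultimately have "K * (\<xi> * N (a - b))\<^sup>2 \<le> \<xi> * ((dh (seg \<xi>) - dh b) \<bullet> (a - b))"
    using strong[of "seg \<xi>" b] b by simp
  then have "\<xi> * (K * \<xi> * c) \<le> \<xi> * ((dh (seg \<xi>) - dh b) \<bullet> (a - b))"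
    unfolding c_def by (simp add: power2_eq_square algebra_simps)
  then have "0 \<le> \<psi> 1 - \<psi> 0" using \<xi> mvt by (simp add: mult_le_cancel_left_pos)
  then show ?thesis unfolding \<psi>_def seg_def bregman_def c_def by simp
qed

lemma min_prox_objective_variational_inequality:
  fixes h :: "'v::real_inner \<Rightarrow> real"
  assumes S: "convex S" and m: "m \<in> S" and q: "q \<in> S"
    and h_deriv: "\<And>x. x \<in> S \<Longrightarrow> (h has_derivative (\<lambda>v. dh x \<bullet> v)) (at x within S)"
    and min: "\<And>z. z \<in> S \<Longrightarrow> y \<bullet> (x - m) + bregman h dh m x \<le> y \<bullet> (x - z) + bregman h dh z x"
  shows "0 \<le> (dh m - dh x - y) \<bullet> (q - m)"
proof -
  have "((\<lambda>z. y \<bullet> (x - z) + bregman h dh z x) has_derivative (\<lambda>v. (dh m - dh x - y) \<bullet> v)) (at m within S)"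
    unfolding bregman_def using h_deriv[OF m]
    by (auto intro!: derivative_eq_intros simp: inner_diff_left inner_diff_right algebra_simps)
  from min_on_convex_imp_derivative_nonneg[OF S m q this min] show ?thesis .
qed

lemma prox_variational_inequality:
  fixes h :: "'v::real_inner \<Rightarrow> real"
  assumes S: "convex S" "compact S" and x: "x \<in> S" and N: "is_norm N" and K: "K > 0"
    and h_deriv: "\<And>x. x \<in> S \<Longrightarrow> (h has_derivative (\<lambda>v. dh x \<bullet> v)) (at x within S)"
    and strong: "\<And>x x'. x \<in> S \<Longrightarrow> x' \<in> S \<Longrightarrow> (dh x - dh x') \<bullet> (x - x') \<ge> K * (N (x - x'))\<^sup>2"
  shows prox_mem: "prox S h dh x y \<in> S"
    and prox_VI: "\<And>q. q \<in> S \<Longrightarrow> 0 \<le> (dh (prox S h dh x y) - dh x - y) \<bullet> (q - prox S h dh x y)"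
proof -
  define \<phi> where "\<phi> z = y \<bullet> (x - z) + bregman h dh z x" for z
  have "continuous_on S h"
    using h_deriv has_derivative_continuous continuous_on_eq_continuous_within by blast
  then have "continuous_on S \<phi>" unfolding \<phi>_def bregman_def by (intro continuous_intros)
  then obtain m where m: "m \<in> S" "\<And>z. z \<in> S \<Longrightarrow> \<phi> m \<le> \<phi> z"
    using continuous_attains_inf[OF S(2)] x by blast
  have VI: "0 \<le> (dh m' - dh x - y) \<bullet> (q - m')"
    if "is_arg_min \<phi> (\<lambda>z. z \<in> S) m'" "q \<in> S" for m' q
    using that min_prox_objective_variational_inequality[OF S(1) _ _ h_deriv]
    unfolding is_arg_min_def \<phi>_def by (meson not_less)
  have "m' = m" if m': "is_arg_min \<phi> (\<lambda>z. z \<in> S) m'" for m'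
  proof -
    have m'S: "m' \<in> S" using m' unfolding is_arg_min_def by blast
    have am: "is_arg_min \<phi> (\<lambda>z. z \<in> S) m" using m unfolding is_arg_min_def by (auto simp: not_less)
    have "(dh m' - dh m) \<bullet> (m' - m) \<le> 0"
      using VI[OF m' m(1)] VI[OF am m'S] by (simp add: inner_diff_left inner_diff_right inner_commute)
    then have "K * (N (m' - m))\<^sup>2 \<le> 0" using strong[OF m'S m(1)] by linarith
    then show ?thesis using K is_norm_eq_zero_iff[OF N, of "m' - m"]
      by (simp add: mult_le_0_iff)
  qed
  moreover have "is_arg_min \<phi> (\<lambda>z. z \<in> S) m" using m unfolding is_arg_min_def by (auto simp: not_less)
  ultimately have "prox S h dh x y = m" unfolding prox_def \<phi>_def[symmetric] by (rule the_equality[rotated])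
  then show "prox S h dh x y \<in> S" "\<And>q. q \<in> S \<Longrightarrow> 0 \<le> (dh (prox S h dh x y) - dh x - y) \<bullet> (q - prox S h dh x y)"
    using m(1) VI \<open>is_arg_min \<phi> (\<lambda>z. z \<in> S) m\<close> by auto
qed

section \<open>Real sequences\<close>

lemma tendsto_zero_if_square_le:
  fixes u v :: "nat \<Rightarrow> real"
  assumes "\<And>n. 0 \<le> u n" "\<And>n. (u n)\<^sup>2 \<le> v n" "v \<longlonglongrightarrow> 0"
  shows "u \<longlonglongrightarrow> 0"
proof (rule tendsto_sandwich[of "\<lambda>n. 0" _ _ "\<lambda>n. sqrt (v n)"])
  show "\<forall>\<^sub>F n in sequentially. u n \<le> sqrt (v n)" using assms(1,2) by (simp add: real_le_rsqrt)
  show "(\<lambda>n. sqrt (v n)) \<longlonglongrightarrow> 0" using tendsto_real_sqrt[OF assms(3)] by simp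
qed (use assms(1) in simp_all)

lemma antimono_from_if_trapped:
  fixes a :: "nat \<Rightarrow> real"
  assumes trap: "\<And>n. m \<le> n \<Longrightarrow> a n < \<epsilon> \<Longrightarrow> a (Suc n) \<le> a n"
    and n0: "m \<le> n0" "a n0 < \<epsilon>"
  shows "\<And>n. n0 \<le> n \<Longrightarrow> a (Suc n) \<le> a n"
proof -
  have below: "a n \<le> a n0" if "n0 \<le> n" for n
    using that
  proof (induction n rule: dec_induct)
    case (step n)
    then have "a (Suc n) \<le> a n" using n0 by (intro trap) auto
    then show ?case using step.IH by simp
  qed simp
  show "a (Suc n) \<le> a n" if "n0 \<le> n" for n
    using below[OF that] that n0 by (intro trap) auto
qed

lemma tendsto_zero_if_eventually_antimono:
  fixes a :: "nat \<Rightarrow> real"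
  assumes nonneg: "\<And>n. 0 \<le> a n" and mono: "\<And>n. n0 \<le> n \<Longrightarrow> a (Suc n) \<le> a n"
    and r: "strict_mono r" and sub: "(a \<circ> r) \<longlonglongrightarrow> 0"
  shows "a \<longlonglongrightarrow> 0"
proof -
  have "decseq (\<lambda>k. a (k + n0))" using mono by (intro decseq_SucI) simp
  then obtain L where "(\<lambda>k. a (k + n0)) \<longlonglongrightarrow> L" using decseq_convergent nonneg by blast
  then have "a \<longlonglongrightarrow> L" by (rule LIMSEQ_offset)
  moreover have "L = 0" using LIMSEQ_unique[OF LIMSEQ_subseq_LIMSEQ[OF \<open>a \<longlonglongrightarrow> L\<close> r] sub] .
  ultimately show ?thesis by simp
qed

section \<open>Optimistic mirror descent\<close>

locale optimistic_mirror_descent =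
  fixes S :: "'v::euclidean_space set" and N :: "'v \<Rightarrow> real"
    and h :: "'v \<Rightarrow> real" and dh :: "'v \<Rightarrow> 'v" and K :: real
    and g :: "'v \<Rightarrow> 'v" and Lg :: real and \<gamma> :: "nat \<Rightarrow> real"
    and X Y :: "nat \<Rightarrow> 'v"
  assumes S_convex: "convex S" and S_compact: "compact S" and N: "is_norm N"
    and h_deriv: "\<And>x. x \<in> S \<Longrightarrow> (h has_derivative (\<lambda>v. dh x \<bullet> v)) (at x within S)"
    and K_pos: "K > 0"
    and h_strong: "\<And>x x'. x \<in> S \<Longrightarrow> x' \<in> S \<Longrightarrow> (dh x - dh x') \<bullet> (x - x') \<ge> K * (N (x - x'))\<^sup>2"
    and g_lip: "\<And>x x'. x \<in> S \<Longrightarrow> x' \<in> S \<Longrightarrow> dual_norm N (g x - g x') \<le> Lg * N (x - x')"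
    and Lg_nonneg: "Lg \<ge> 0"
    and \<gamma>_pos: "\<And>n. \<gamma> n > 0" and \<gamma>_bdd: "bdd_above (range \<gamma>)"
    and \<gamma>_sup: "(SUP n. \<gamma> n) * Lg < K"
    and X_0: "X 0 \<in> S"
    and Y_def: "\<And>n. Y n = prox S h dh (X n) (- (\<gamma> n *\<^sub>R g (X n)))"
    and X_Suc: "\<And>n. X (Suc n) = prox S h dh (X n) (- (\<gamma> n *\<^sub>R g (Y n)))"
begin

definition \<delta> :: real where "\<delta> = (K - (SUP n. \<gamma> n) * Lg) / 2"

lemma \<delta>_pos: "\<delta> > 0"
  using \<gamma>_sup unfolding \<delta>_def by simp

lemma bregman_lower: "a \<in> S \<Longrightarrow> b \<in> S \<Longrightarrow> K / 2 * (N (a - b))\<^sup>2 \<le> bregman h dh a b"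
  by (rule bregman_ge_strongly_convex[OF S_convex _ _ N h_deriv h_strong])

lemma bregman_nonneg: "a \<in> S \<Longrightarrow> b \<in> S \<Longrightarrow> 0 \<le> bregman h dh a b"
  by (rule order_trans[OF _ bregman_lower]) (use K_pos in simp_all)

lemmas prox_step_mem = prox_mem[OF S_convex S_compact _ N K_pos h_deriv h_strong]
   and prox_step_VI = prox_VI[OF S_convex S_compact _ N K_pos h_deriv h_strong]

lemma X_mem: "X n \<in> S"
  by (induction n) (simp_all add: X_0 X_Suc prox_step_mem)

lemma Y_mem: "Y n \<in> S"
  by (simp add: Y_def X_mem prox_step_mem)

lemma Y_VI: "q \<in> S \<Longrightarrow> 0 \<le> (dh (Y n) - dh (X n) + \<gamma> n *\<^sub>R g (X n)) \<bullet> (q - Y n)"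
  using prox_step_VI[OF X_mem[of n], of q "- (\<gamma> n *\<^sub>R g (X n))"] by (simp add: Y_def[symmetric])

lemma X_Suc_VI: "q \<in> S \<Longrightarrow> 0 \<le> (dh (X (Suc n)) - dh (X n) + \<gamma> n *\<^sub>R g (Y n)) \<bullet> (q - X (Suc n))"
  using prox_step_VI[OF X_mem[of n], of q "- (\<gamma> n *\<^sub>R g (Y n))"] by (simp add: X_Suc[symmetric])

lemma extrapolation_error_le:
  "\<gamma> n * ((g (X n) - g (Y n)) \<bullet> (X (Suc n) - Y n))
     \<le> (SUP n. \<gamma> n) * Lg * (((N (X (Suc n) - Y n))\<^sup>2 + (N (Y n - X n))\<^sup>2) / 2)"
proof -
  define a b where "a = N (X (Suc n) - Y n)" and "b = N (Y n - X n)"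
  have "(g (X n) - g (Y n)) \<bullet> (X (Suc n) - Y n) \<le> dual_norm N (g (X n) - g (Y n)) * a"
    unfolding a_def by (rule inner_le_dual_norm[OF N])
  also have "\<dots> \<le> Lg * b * a"
    using g_lip[OF X_mem Y_mem, of n n] is_norm_minus_commute[OF N, of "X n" "Y n"]
      is_norm_nonneg[OF N] unfolding a_def b_def by (simp add: mult_right_mono)
  also have "\<dots> \<le> Lg * ((a\<^sup>2 + b\<^sup>2) / 2)"
  proof -
    have "b * a \<le> (a\<^sup>2 + b\<^sup>2) / 2" using zero_le_power2[of "a - b"]
      by (simp add: power2_eq_square algebra_simps)
    then show ?thesis using Lg_nonneg by (simp add: mult_left_mono mult.assoc)
  qed
  finally have "\<gamma> n * ((g (X n) - g (Y n)) \<bullet> (X (Suc n) - Y n)) \<le> \<gamma> n * (Lg * ((a\<^sup>2 + b\<^sup>2) / 2))"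
    using \<gamma>_pos[of n] by simp
  also have "\<dots> \<le> (SUP n. \<gamma> n) * (Lg * ((a\<^sup>2 + b\<^sup>2) / 2))"
    using cSUP_upper[OF _ \<gamma>_bdd] Lg_nonneg by (intro mult_right_mono) auto
  finally show ?thesis unfolding a_def b_def by (simp add: mult.assoc)
qed

lemma descent:
  assumes p: "p \<in> S"
  shows "bregman h dh p (X (Suc n)) \<le> bregman h dh p (X n) - \<gamma> n * (g (Y n) \<bullet> (Y n - p))
           - \<delta> * ((N (X (Suc n) - Y n))\<^sup>2 + (N (Y n - X n))\<^sup>2)"
proof -
  have "bregman h dh p (X n) = bregman h dh p (X (Suc n)) + bregman h dh (X (Suc n)) (Y n)
      + bregman h dh (Y n) (X n) + (dh (Y n) - dh (X n)) \<bullet> (X (Suc n) - Y n)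
      + (dh (X (Suc n)) - dh (X n)) \<bullet> (p - X (Suc n))"
    using bregman_three_point[of h dh p "X n" "X (Suc n)"]
      bregman_three_point[of h dh "X (Suc n)" "X n" "Y n"] by simp
  moreover have "\<gamma> n * (g (X n) \<bullet> (Y n - X (Suc n))) \<le> (dh (Y n) - dh (X n)) \<bullet> (X (Suc n) - Y n)"
    using Y_VI[OF X_mem[of "Suc n"], of n] by (simp add: inner_add_left inner_diff_right algebra_simps)
  moreover have "\<gamma> n * (g (Y n) \<bullet> (X (Suc n) - p)) \<le> (dh (X (Suc n)) - dh (X n)) \<bullet> (p - X (Suc n))"
    using X_Suc_VI[OF p, of n] by (simp add: inner_add_left inner_diff_right algebra_simps)
  moreover have "\<gamma> n * (g (X n) \<bullet> (Y n - X (Suc n))) + \<gamma> n * (g (Y n) \<bullet> (X (Suc n) - p))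
      = \<gamma> n * (g (Y n) \<bullet> (Y n - p)) - \<gamma> n * ((g (X n) - g (Y n)) \<bullet> (X (Suc n) - Y n))"
    by (simp add: inner_diff_left inner_diff_right algebra_simps)
  moreover have "\<delta> * ((N (X (Suc n) - Y n))\<^sup>2 + (N (Y n - X n))\<^sup>2)
      = K / 2 * (N (X (Suc n) - Y n))\<^sup>2 + K / 2 * (N (Y n - X n))\<^sup>2
        - (SUP n. \<gamma> n) * Lg * (((N (X (Suc n) - Y n))\<^sup>2 + (N (Y n - X n))\<^sup>2) / 2)"
    unfolding \<delta>_def by (simp add: field_simps)
  ultimately show ?thesis
    using bregman_lower[OF X_mem Y_mem, of "Suc n" n] bregman_lower[OF Y_mem X_mem, of n n]
      extrapolation_error_le[of n] by linarith
qed

lemma descent_MVI: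
  assumes p: "p \<in> S" "is_MVI S g p"
  shows "bregman h dh p (X (Suc n))
           \<le> bregman h dh p (X n) - \<delta> * (N (Y n - X n))\<^sup>2"
proof -
  have "0 \<le> \<gamma> n * (g (Y n) \<bullet> (Y n - p))"
    using p(2) Y_mem \<gamma>_pos[of n] unfolding is_MVI_def by simp
  moreover have "0 \<le> \<delta> * (N (X (Suc n) - Y n))\<^sup>2"
    using \<delta>_pos by simp
  ultimately show ?thesis
    using descent[OF p(1), of n] distrib_left[of \<delta> "(N (X (Suc n) - Y n))\<^sup>2" "(N (Y n - X n))\<^sup>2"]
    by linarith
qed

lemma Y_minus_X_tendsto_zero:
  assumes p: "p \<in> S" "is_MVI S g p"
  shows "(\<lambda>n. Y n - X n) \<longlonglongrightarrow> 0"
proof -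
  define d where "d n = bregman h dh p (X n)" for n
  have d_step: "\<delta> * (N (Y n - X n))\<^sup>2 \<le> d n - d (Suc n)" for n
    using descent_MVI[OF p, of n] unfolding d_def by simp
  have "decseq d"
  proof (rule decseq_SucI)
    fix n
    have "0 \<le> \<delta> * (N (Y n - X n))\<^sup>2" using \<delta>_pos by simp
    then show "d (Suc n) \<le> d n" using d_step[of n] by linarith
  qed
  then obtain L where L: "d \<longlonglongrightarrow> L"
    using decseq_convergent bregman_nonneg[OF p(1) X_mem] unfolding d_def by blast
  have "(\<lambda>n. d n - d (Suc n)) \<longlonglongrightarrow> 0"
    using tendsto_diff[OF L LIMSEQ_Suc[OF L]] by simp
  then have "(\<lambda>n. (d n - d (Suc n)) / \<delta>) \<longlonglongrightarrow> 0"
    by (rule tendsto_divide_zero)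
  moreover have "(N (Y n - X n))\<^sup>2 \<le> (d n - d (Suc n)) / \<delta>" for n
    using d_step[of n] \<delta>_pos by (simp add: pos_le_divide_eq mult.commute)
  ultimately have NYX: "(\<lambda>n. N (Y n - X n)) \<longlonglongrightarrow> 0"
    by (intro tendsto_zero_if_square_le[OF is_norm_nonneg[OF N]]) simp_all
  obtain c where c: "c > 0" "\<And>x. c * norm x \<le> N x" using is_norm_ge_norm[OF N] by blast
  then have "\<forall>\<^sub>F n in sequentially. norm (Y n - X n) \<le> N (Y n - X n) / c"
    by (simp add: field_simps mult.commute)
  then show ?thesis by (rule Lim_null_comparison[OF _ tendsto_divide_zero[OF NYX]])
qed

lemma g_continuous: "continuous_on S g"
  using dual_norm_lipschitz_imp_lipschitz_on[OF N g_lip] lipschitz_on_continuous_on by blast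

lemma cluster_point_SVI:
  assumes YX: "(\<lambda>n. Y n - X n) \<longlonglongrightarrow> 0" and dh_cont: "continuous_on S dh"
    and \<gamma>_conv: "convergent \<gamma>" and \<gamma>_lim: "lim \<gamma> > 0"
    and r: "strict_mono r" and Xr: "(X \<circ> r) \<longlonglongrightarrow> l"
  shows "is_SVI S g l"
proof -
  have l: "l \<in> S"
    using closed_sequentially[OF compact_imp_closed[OF S_compact] _ Xr] X_mem by simp
  have Yr: "(Y \<circ> r) \<longlonglongrightarrow> l"
    using tendsto_add[OF Xr LIMSEQ_subseq_LIMSEQ[OF YX r]] by (simp add: comp_def)
  have "0 \<le> g l \<bullet> (q - l)" if q: "q \<in> S" for q
  proof -
    have "(\<lambda>k. dh (Y (r k))) \<longlonglongrightarrow> dh l" "(\<lambda>k. dh (X (r k))) \<longlonglongrightarrow> dh l"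
      "(\<lambda>k. g (X (r k))) \<longlonglongrightarrow> g l" "(\<lambda>k. \<gamma> (r k)) \<longlonglongrightarrow> lim \<gamma>"
      using continuous_on_tendsto_compose[OF dh_cont Yr l] continuous_on_tendsto_compose[OF dh_cont Xr l]
        continuous_on_tendsto_compose[OF g_continuous Xr l] X_mem Y_mem
        LIMSEQ_subseq_LIMSEQ[OF \<gamma>_conv[unfolded convergent_LIMSEQ_iff] r]
      by (simp_all add: comp_def)
    then have "(\<lambda>k. (dh (Y (r k)) - dh (X (r k)) + \<gamma> (r k) *\<^sub>R g (X (r k))) \<bullet> (q - Y (r k)))
        \<longlonglongrightarrow> (dh l - dh l + lim \<gamma> *\<^sub>R g l) \<bullet> (q - l)"
      using Yr by (intro tendsto_intros) (simp_all add: comp_def)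
    then have "0 \<le> (dh l - dh l + lim \<gamma> *\<^sub>R g l) \<bullet> (q - l)"
      by (rule LIMSEQ_le_const) (use Y_VI[OF q] in blast)
    then have "0 \<le> lim \<gamma> * (g l \<bullet> (q - l))" by simp
    then show ?thesis using \<gamma>_lim by (simp add: zero_le_mult_iff)
  qed
  then show ?thesis using l unfolding is_SVI_def by blast
qed

lemma bregman_Y_le_bregman_X:
  assumes dh_lip: "M-lipschitz_on S dh" and l: "l \<in> S"
  shows "bregman h dh l (Y n) \<le> bregman h dh l (X n) + M * diameter S * norm (Y n - X n)"
proof -
  have "bregman h dh l (X n)
      = bregman h dh l (Y n) + bregman h dh (Y n) (X n) + (dh (Y n) - dh (X n)) \<bullet> (l - Y n)"
    by (rule bregman_three_point)
  moreover have "- ((dh (Y n) - dh (X n)) \<bullet> (l - Y n)) \<le> norm (dh (Y n) - dh (X n)) * norm (l - Y n)"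
    using Cauchy_Schwarz_ineq2[of "dh (Y n) - dh (X n)" "l - Y n"] by linarith
  moreover have "norm (dh (Y n) - dh (X n)) * norm (l - Y n) \<le> M * norm (Y n - X n) * diameter S"
    using lipschitz_on_normD[OF dh_lip Y_mem X_mem] lipschitz_on_nonneg[OF dh_lip]
      diameter_bounded_bound[OF compact_imp_bounded[OF S_compact] l Y_mem]
    by (intro mult_mono) (auto simp: dist_norm)
  ultimately show ?thesis using bregman_nonneg[OF Y_mem X_mem, of n n] by (simp add: algebra_simps)
qed

text \<open>Since \<open>Y n - X n \<longlonglongrightarrow> 0\<close> and \<open>dh\<close> is Lipschitz, \<open>Y n\<close> is Bregman-close to \<open>l\<close>
  whenever \<open>X n\<close> is, and then the gradient term of the descent inequality has the right sign.\<close>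
lemma eventually_descent_near_local_solution:
  assumes YX: "(\<lambda>n. Y n - X n) \<longlonglongrightarrow> 0" and dh_lip: "M-lipschitz_on S dh"
    and l: "l \<in> S" and \<epsilon>: "\<epsilon> > 0"
    and local: "\<And>x. x \<in> S \<Longrightarrow> bregman h dh l x \<le> \<epsilon> \<Longrightarrow> 0 \<le> g x \<bullet> (x - l)"
  obtains m where "\<And>n. m \<le> n \<Longrightarrow> bregman h dh l (X n) < \<epsilon> / 2
                     \<Longrightarrow> bregman h dh l (X (Suc n)) \<le> bregman h dh l (X n)"
proof -
  have "(\<lambda>n. M * diameter S * norm (Y n - X n)) \<longlonglongrightarrow> 0"
    by (rule tendsto_mult_right_zero[OF tendsto_norm_zero[OF YX]])
  then obtain m where m: "\<And>n. m \<le> n \<Longrightarrow> M * diameter S * norm (Y n - X n) < \<epsilon> / 2"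
    using order_tendstoD(2)[of _ 0 sequentially "\<epsilon> / 2"] \<epsilon> unfolding eventually_sequentially by auto
  have "bregman h dh l (X (Suc n)) \<le> bregman h dh l (X n)"
    if "m \<le> n" "bregman h dh l (X n) < \<epsilon> / 2" for n
  proof -
    have "bregman h dh l (Y n) \<le> \<epsilon>" using bregman_Y_le_bregman_X[OF dh_lip l, of n] m[OF that(1)] that(2) by linarith
    then have "0 \<le> \<gamma> n * (g (Y n) \<bullet> (Y n - l))" using local[OF Y_mem] \<gamma>_pos[of n] by simp
    moreover have "0 \<le> \<delta> * ((N (X (Suc n) - Y n))\<^sup>2 + (N (Y n - X n))\<^sup>2)"
      using \<delta>_pos by simp
    ultimately show ?thesis using descent[OF l, of n] by linarith
  qed
  then show ?thesis using that by blast
qed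

lemma local_solution_attracts:
  assumes YX: "(\<lambda>n. Y n - X n) \<longlonglongrightarrow> 0" and dh_lip: "M-lipschitz_on S dh"
    and l: "l \<in> S" and \<epsilon>: "\<epsilon> > 0"
    and local: "\<And>x. x \<in> S \<Longrightarrow> bregman h dh l x \<le> \<epsilon> \<Longrightarrow> 0 \<le> g x \<bullet> (x - l)"
    and r: "strict_mono r" and sub: "(\<lambda>k. bregman h dh l (X (r k))) \<longlonglongrightarrow> 0"
  obtains n0 where "\<And>n. n0 \<le> n \<Longrightarrow> bregman h dh l (X (Suc n)) \<le> bregman h dh l (X n)"
    and "(\<lambda>n. bregman h dh l (X n)) \<longlonglongrightarrow> 0"
proof -
  obtain m where trap: "\<And>n. m \<le> n \<Longrightarrow> bregman h dh l (X n) < \<epsilon> / 2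
                     \<Longrightarrow> bregman h dh l (X (Suc n)) \<le> bregman h dh l (X n)"
    using eventually_descent_near_local_solution[OF YX dh_lip l \<epsilon> local] by blast
  obtain k0 where "\<And>k. k0 \<le> k \<Longrightarrow> bregman h dh l (X (r k)) < \<epsilon> / 2"
    using order_tendstoD(2)[OF sub, of "\<epsilon> / 2"] \<epsilon> unfolding eventually_sequentially by auto
  then have entered: "m \<le> r (max k0 m)" "bregman h dh l (X (r (max k0 m))) < \<epsilon> / 2"
    using seq_suble[OF r, of "max k0 m"] by auto
  have mono: "\<And>n. r (max k0 m) \<le> n \<Longrightarrow> bregman h dh l (X (Suc n)) \<le> bregman h dh l (X n)"
    by (rule antimono_from_if_trapped[OF trap entered]) auto
  moreover have "(\<lambda>n. bregman h dh l (X n)) \<longlonglongrightarrow> 0"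
    using tendsto_zero_if_eventually_antimono[of "\<lambda>n. bregman h dh l (X n)", OF _ mono r] sub
      bregman_nonneg[OF l X_mem] by (simp add: comp_def)
  ultimately show ?thesis using that by blast
qed

lemma X_tendsto_if_bregman_tendsto_zero:
  assumes l: "l \<in> S" and D: "(\<lambda>n. bregman h dh l (X n)) \<longlonglongrightarrow> 0"
  shows "X \<longlonglongrightarrow> l"
proof -
  obtain c where c: "c > 0" "\<And>x. c * norm x \<le> N x" using is_norm_ge_norm[OF N] by blast
  have "(norm (X n - l))\<^sup>2 \<le> bregman h dh l (X n) * (2 / (K * c\<^sup>2))" for n
  proof -
    have "c * norm (X n - l) \<le> N (l - X n)"
      using c(2)[of "X n - l"] is_norm_minus_commute[OF N, of "X n" l] by simp
    then have "(c * norm (X n - l))\<^sup>2 \<le> (N (l - X n))\<^sup>2"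
      using c(1) by (intro power_mono) simp_all
    also have "\<dots> \<le> bregman h dh l (X n) * (2 / K)"
      using bregman_lower[OF l X_mem, of n] K_pos by (simp add: field_simps)
    finally show ?thesis using c K_pos by (simp add: field_simps power_mult_distrib)
  qed
  then have "(\<lambda>n. norm (X n - l)) \<longlonglongrightarrow> 0"
    by (intro tendsto_zero_if_square_le[OF _ _ tendsto_mult_left_zero[OF D, of "2 / (K * c\<^sup>2)"]])
      simp_all
  then show ?thesis by (simp add: LIM_zero_iff tendsto_norm_zero_iff)
qed

end

theorem theorem1:
  fixes X1 :: "'a::euclidean_space set" and X2 :: "'b::euclidean_space set"
    and N :: "'a \<times> 'b \<Rightarrow> real"
    and f :: "'a \<times> 'b \<Rightarrow> real" and Df :: "'a \<times> 'b \<Rightarrow> 'a \<times> 'b"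
    and g :: "'a \<times> 'b \<Rightarrow> 'a \<times> 'b"
    and h :: "'a \<times> 'b \<Rightarrow> real" and dh :: "'a \<times> 'b \<Rightarrow> 'a \<times> 'b"
    and K Lh Lg :: real and \<gamma> :: "nat \<Rightarrow> real"
    and X Y :: "nat \<Rightarrow> 'a \<times> 'b"
  assumes X1: "compact X1" "convex X1" and X2: "compact X2" "convex X2"
    and N: "is_norm N"
    and f_deriv: "\<And>x. x \<in> X1 \<times> X2 \<Longrightarrow> (f has_derivative (\<lambda>v. Df x \<bullet> v)) (at x within X1 \<times> X2)"
    and f_C1: "continuous_on (X1 \<times> X2) Df"
    and g_def: "\<And>x. g x = (fst (Df x), - snd (Df x))"
    and h_deriv: "\<And>x. x \<in> X1 \<times> X2 \<Longrightarrow> (h has_derivative (\<lambda>v. dh x \<bullet> v)) (at x within X1 \<times> X2)"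
    and K: "K > 0"
    and h_strong: "\<And>x x'. x \<in> X1 \<times> X2 \<Longrightarrow> x' \<in> X1 \<times> X2 \<Longrightarrow>
                    (dh x - dh x') \<bullet> (x - x') \<ge> K * (N (x - x'))\<^sup>2"
    and h_lip: "\<And>x x'. x \<in> X1 \<times> X2 \<Longrightarrow> x' \<in> X1 \<times> X2 \<Longrightarrow>
                    dual_norm N (dh x - dh x') \<le> Lh * N (x - x')"
    and reciprocity: "\<And>p xn. p \<in> X1 \<times> X2 \<Longrightarrow> (\<forall>n. xn n \<in> X1 \<times> X2) \<Longrightarrow> xn \<longlonglongrightarrow> p \<Longrightarrow>
                    (\<lambda>n. bregman h dh p (xn n)) \<longlonglongrightarrow> 0"
    and coh: "coherent X1 X2 f g (bregman h dh)"
    and Lg: "Lg \<ge> 0"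
    and g_lip: "\<And>x x'. x \<in> X1 \<times> X2 \<Longrightarrow> x' \<in> X1 \<times> X2 \<Longrightarrow>
                    dual_norm N (g x - g x') \<le> Lg * N (x - x')"
    and \<gamma>_pos: "\<And>n. \<gamma> n > 0"
    and \<gamma>_conv: "convergent \<gamma>" and \<gamma>_lim: "lim \<gamma> > 0"
    and \<gamma>_bdd: "bdd_above (range \<gamma>)" and \<gamma>_sup: "(SUP n. \<gamma> n) * Lg < K"
    and X0: "X 0 \<in> X1 \<times> X2"
    and Y_def: "\<And>n. Y n = prox (X1 \<times> X2) h dh (X n) (- (\<gamma> n *\<^sub>R g (X n)))"
    and X_step: "\<And>n. X (Suc n) = prox (X1 \<times> X2) h dh (X n) (- (\<gamma> n *\<^sub>R g (Y n)))"
  shows "\<exists>xs\<in>saddle_points X1 X2 f. X \<longlonglongrightarrow> xs \<and>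
           (\<exists>n0. \<forall>n\<ge>n0. bregman h dh xs (X (Suc n)) \<le> bregman h dh xs (X n))"
proof -
  \<comment> \<open>The hypotheses on \<open>f\<close> and \<open>Df\<close> enter only through coherence; continuity of \<open>g\<close>
    follows from its Lipschitz bound.\<close>
  interpret omd: optimistic_mirror_descent "X1 \<times> X2" N h dh K g Lg \<gamma> X Y
    using X1 X2 N h_deriv K h_strong g_lip Lg \<gamma>_pos \<gamma>_bdd \<gamma>_sup X0 Y_def X_step
    by unfold_locales (auto intro: compact_Times convex_Times)
  obtain p where "p \<in> saddle_points X1 X2 f" "is_MVI (X1 \<times> X2) g p"
    using coh unfolding coherent_def by blast
  then have YX: "(\<lambda>n. Y n - X n) \<longlonglongrightarrow> 0"
    by (intro omd.Y_minus_X_tendsto_zero) (auto simp: saddle_points_def)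
  obtain M where dh_lip: "M-lipschitz_on (X1 \<times> X2) dh"
    using dual_norm_lipschitz_imp_lipschitz_on[OF N h_lip] by blast
  obtain l r where l: "l \<in> X1 \<times> X2" and r: "strict_mono r" and Xr: "(X \<circ> r) \<longlonglongrightarrow> l"
    using seq_compactE[OF compact_imp_seq_compact[OF omd.S_compact]] omd.X_mem by metis
  have "is_SVI (X1 \<times> X2) g l"
    by (rule omd.cluster_point_SVI[OF YX lipschitz_on_continuous_on[OF dh_lip] \<gamma>_conv \<gamma>_lim r Xr])
  then have saddle: "l \<in> saddle_points X1 X2 f"
    using coh unfolding coherent_def by blast
  then obtain \<epsilon> where \<epsilon>: "\<epsilon> > 0"
    and local: "\<And>x. x \<in> X1 \<times> X2 \<Longrightarrow> bregman h dh l x \<le> \<epsilon> \<Longrightarrow> 0 \<le> g x \<bullet> (x - l)"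
    using coh unfolding coherent_def by blast
  have "(\<lambda>k. bregman h dh l (X (r k))) \<longlonglongrightarrow> 0"
    using reciprocity[OF l _ Xr] omd.X_mem by (simp add: comp_def)
  then obtain n0 where "\<And>n. n0 \<le> n \<Longrightarrow> bregman h dh l (X (Suc n)) \<le> bregman h dh l (X n)"
    and "(\<lambda>n. bregman h dh l (X n)) \<longlonglongrightarrow> 0"
    using omd.local_solution_attracts[OF YX dh_lip l \<epsilon> local r] by blast
  then show ?thesis using saddle omd.X_tendsto_if_bregman_tendsto_zero[OF l] by blast
qed

end
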